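(* For each finite set $\tau\subseteq\mathbb{S}$ of source labels, the set of graphs $\mathcal{G}^\tau_{\mathrm{gen}}$ is context-free.
   Context: Fix a countably infinite set $\mathbb{S}$ of source labels and a set $\mathbb{A}$ of edge labels with arities $\ge1$. Graphs of sort $\tau$ are isomorphism classes of finite $\mathbb{A}$-labelled hypergraphs with an injective map from $\tau$ into the vertices (sources). HR operations: constants $\mathbf{0}_\tau$ (sources only) and $\mathbf{a}_{(s_1,\ldots,s_{\#a})}$ (single $a$-edge on the $s_i$-sources); unary $\mathsf{restrict}_\tau$ (forget source labels outside $\tau$), $\mathsf{rename}_\alpha$ ($\alpha$ a finite permutation of $\mathbb{S}$, relabelling sources), binary $\parallel$ (disjoint union fusing equally labelled sources). $\mathcal{G}^\tau_{\mathrm{gen}}$ is the set of values of ground terms using only $\mathbf{0}_{\tau'}$ ($\tau'\subseteq\tau$), $\mathbf{a}_{(s_1,\ldots)}$ ($s_i\in\tau$), $\mathsf{restrict}_{\tau'}$ ($\tau'\subseteq\tau$), $\mathsf{rename}_\alpha$ ($\alpha$ fixing all elements outside $\tau$) and $\parallel$. A grammar is a finite set of rules $U\to t$ with $U$ a nonterminal and $t$ a term over HR operations whose variables are nonterminals; a set of graphs is context-free if it is the component of some nonterminal in the least solution of a grammar (terms evaluated on sets by lifting). *)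

theory Defs
  imports Main "HOL-Library.Countable"
begin

text \<open>Graphs in the paper are isomorphism classes; here a "set of graphs" is
  represented by an isomorphism-closed set of concrete well-formed graphs.
  The sort of a graph is dom (src G).\<close>

record ('s, 'a) hgraph =
  verts :: "nat set"
  edges :: "nat set"
  elab  :: "nat \<Rightarrow> 'a"
  att   :: "nat \<Rightarrow> nat list"
  src   :: "'s \<Rightarrow> nat option"

definition wf_graph :: "('a \<Rightarrow> nat) \<Rightarrow> ('s, 'a) hgraph \<Rightarrow> bool" where
  "wf_graph ar G \<longleftrightarrow> finite (verts G) \<and> finite (edges G)
     \<and> (\<forall>e\<in>edges G. set (att G e) \<subseteq> verts G \<and> length (att G e) = ar (elab G e))
     \<and> finite (dom (src G)) \<and> inj_on (src G) (dom (src G)) \<and> ran (src G) \<subseteq> verts G"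

definition graph_iso :: "('s, 'a) hgraph \<Rightarrow> ('s, 'a) hgraph \<Rightarrow> bool" where
  "graph_iso G H \<longleftrightarrow> (\<exists>f g. bij_betw f (verts G) (verts H) \<and> bij_betw g (edges G) (edges H)
     \<and> (\<forall>e\<in>edges G. elab H (g e) = elab G e \<and> att H (g e) = map f (att G e))
     \<and> (\<forall>s. src H s = map_option f (src G s)))"

definition iso_closure :: "('a \<Rightarrow> nat) \<Rightarrow> ('s, 'a) hgraph set \<Rightarrow> ('s, 'a) hgraph set" where
  "iso_closure ar X = {H. wf_graph ar H \<and> (\<exists>G\<in>X. graph_iso G H)}"

definition restrict_g :: "'s set \<Rightarrow> ('s, 'a) hgraph \<Rightarrow> ('s, 'a) hgraph" where
  "restrict_g \<tau> G = G\<lparr>src := src G |` \<tau>\<rparr>"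

text \<open>Renaming: the source labelled s becomes labelled \<alpha> s.\<close>
definition rename_g :: "('s \<Rightarrow> 's) \<Rightarrow> ('s, 'a) hgraph \<Rightarrow> ('s, 'a) hgraph" where
  "rename_g \<alpha> G = G\<lparr>src := (\<lambda>s. src G (inv \<alpha> s))\<rparr>"

text \<open>Parallel composition: disjoint union (G on even numbers, H on odd numbers),
  fusing sources with equal labels (an H-source with label s that is also a G-source
  is identified with the G-source).\<close>
definition par_g :: "('s, 'a) hgraph \<Rightarrow> ('s, 'a) hgraph \<Rightarrow> ('s, 'a) hgraph" where
  "par_g G H =
    (let hv = (\<lambda>v. if (\<exists>s. src H s = Some v \<and> src G s \<noteq> None)
                   then 2 * the (src G (THE s. src H s = Some v)) else 2 * v + 1)
     in \<lparr>verts = (\<lambda>v. 2 * v) ` verts G \<union> hv ` verts H,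
         edges = (\<lambda>e. 2 * e) ` edges G \<union> (\<lambda>e. 2 * e + 1) ` edges H,
         elab = (\<lambda>e. if even e then elab G (e div 2) else elab H (e div 2)),
         att = (\<lambda>e. if even e then map (\<lambda>v. 2 * v) (att G (e div 2)) else map hv (att H (e div 2))),
         src = (\<lambda>s. case src G s of Some v \<Rightarrow> Some (2 * v) | None \<Rightarrow> map_option hv (src H s))\<rparr>)"

datatype ('s, 'a, 'n) hrterm =
    Zero "'s set"
  | EdgeC 'a "'s list"
  | Restrict "'s set" "('s, 'a, 'n) hrterm"
  | Rename "'s \<Rightarrow> 's" "('s, 'a, 'n) hrterm"
  | Par "('s, 'a, 'n) hrterm" "('s, 'a, 'n) hrterm"
  | NT 'n

definition finite_perm :: "('s \<Rightarrow> 's) \<Rightarrow> bool" where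
  "finite_perm \<alpha> \<longleftrightarrow> bij \<alpha> \<and> finite {s. \<alpha> s \<noteq> s}"

fun valid_term :: "('a \<Rightarrow> nat) \<Rightarrow> ('s, 'a, 'n) hrterm \<Rightarrow> bool" where
  "valid_term ar (Zero \<tau>) = finite \<tau>"
| "valid_term ar (EdgeC a ss) = (length ss = ar a)"
| "valid_term ar (Restrict \<tau> t) = (finite \<tau> \<and> valid_term ar t)"
| "valid_term ar (Rename \<alpha> t) = (finite_perm \<alpha> \<and> valid_term ar t)"
| "valid_term ar (Par t u) = (valid_term ar t \<and> valid_term ar u)"
| "valid_term ar (NT U) = True"

fun eval_term :: "('a \<Rightarrow> nat) \<Rightarrow> ('n \<Rightarrow> ('s, 'a) hgraph set) \<Rightarrow> ('s, 'a, 'n) hrterm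
                    \<Rightarrow> ('s, 'a) hgraph set" where
  "eval_term ar \<nu> (Zero \<tau>) =
     {G. wf_graph ar G \<and> dom (src G) = \<tau> \<and> edges G = {} \<and> verts G = ran (src G)}"
| "eval_term ar \<nu> (EdgeC a ss) =
     {G. wf_graph ar G \<and> dom (src G) = set ss \<and> verts G = ran (src G)
         \<and> (\<exists>e. edges G = {e} \<and> elab G e = a \<and> att G e = map (\<lambda>s. the (src G s)) ss)}"
| "eval_term ar \<nu> (Restrict \<tau> t) = iso_closure ar (restrict_g \<tau> ` eval_term ar \<nu> t)"
| "eval_term ar \<nu> (Rename \<alpha> t) = iso_closure ar (rename_g \<alpha> ` eval_term ar \<nu> t)"
| "eval_term ar \<nu> (Par t u) =
     iso_closure ar {par_g G H | G H. G \<in> eval_term ar \<nu> t \<and> H \<in> eval_term ar \<nu> u}"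
| "eval_term ar \<nu> (NT U) = \<nu> U"

definition grammar :: "('a \<Rightarrow> nat) \<Rightarrow> ('n \<times> ('s, 'a, 'n) hrterm) set \<Rightarrow> bool" where
  "grammar ar R \<longleftrightarrow> finite R \<and> (\<forall>(U, t)\<in>R. valid_term ar t)"

definition least_solution :: "('a \<Rightarrow> nat) \<Rightarrow> ('n \<times> ('s, 'a, 'n) hrterm) set
                               \<Rightarrow> 'n \<Rightarrow> ('s, 'a) hgraph set" where
  "least_solution ar R =
     lfp (\<lambda>\<nu> U. \<Union> {eval_term ar \<nu> t | t. (U, t) \<in> R})"

definition context_free :: "('a \<Rightarrow> nat) \<Rightarrow> ('s, 'a) hgraph set \<Rightarrow> bool" where
  "context_free ar X \<longleftrightarrow>
     (\<exists>(R :: (nat \<times> ('s, 'a, nat) hrterm) set) U. grammar ar R \<and> least_solution ar R U = X)"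

fun gen_term :: "('a \<Rightarrow> nat) \<Rightarrow> 's set \<Rightarrow> ('s, 'a, 'n) hrterm \<Rightarrow> bool" where
  "gen_term ar \<tau> (Zero \<tau>') = (\<tau>' \<subseteq> \<tau>)"
| "gen_term ar \<tau> (EdgeC a ss) = (set ss \<subseteq> \<tau> \<and> length ss = ar a)"
| "gen_term ar \<tau> (Restrict \<tau>' t) = (\<tau>' \<subseteq> \<tau> \<and> gen_term ar \<tau> t)"
| "gen_term ar \<tau> (Rename \<alpha> t) = (finite_perm \<alpha> \<and> (\<forall>s. s \<notin> \<tau> \<longrightarrow> \<alpha> s = s) \<and> gen_term ar \<tau> t)"
| "gen_term ar \<tau> (Par t u) = (gen_term ar \<tau> t \<and> gen_term ar \<tau> u)"
| "gen_term ar \<tau> (NT U) = False"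

definition G_gen :: "('a \<Rightarrow> nat) \<Rightarrow> 's set \<Rightarrow> ('s, 'a) hgraph set" where
  "G_gen ar \<tau> = \<Union> {eval_term ar (\<lambda>_. {}) t | t :: ('s, 'a, nat) hrterm. gen_term ar \<tau> t}"

end

theory Submission
  imports Defs "HOL-Combinatorics.Permutations"
begin

text \<open>A single nonterminal suffices: its rules are the generating operations themselves,
  with every argument position filled by the nonterminal. There are only finitely many
  such rules because \<open>\<tau>\<close> and the edge alphabet are finite, and a renaming allowed in
  \<open>G_gen ar \<tau>\<close> is a permutation of \<open>\<tau>\<close>. The component of the nonterminal in the least
  solution contains the value of every generating term, by induction on the term, and conversely
  \<open>G_gen ar \<tau>\<close> is closed under each rule, so it bounds the least fixed point from above.\<close>

lemma iso_closure_mono: "A \<subseteq> B \<Longrightarrow> iso_closure ar A \<subseteq> iso_closure ar B"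
  unfolding iso_closure_def by blast

lemma eval_term_mono: "\<nu> \<le> \<nu>' \<Longrightarrow> eval_term ar \<nu> t \<subseteq> eval_term ar \<nu>' t"
proof (induction t)
  case (Par t u)
  then show ?case
    by (simp only: eval_term.simps, intro iso_closure_mono) blast
qed (auto simp: le_fun_def intro!: iso_closure_mono)

lemma mono_grammar_step:
  fixes ar :: "'a \<Rightarrow> nat" and R :: "('n \<times> ('s, 'a, 'n) hrterm) set"
  shows "mono (\<lambda>\<nu> U. \<Union> {eval_term ar \<nu> t | t. (U, t) \<in> R})"
proof (rule monoI)
  fix \<nu> \<nu>' :: "'n \<Rightarrow> ('s, 'a) hgraph set" assume "\<nu> \<le> \<nu>'"
  then have "eval_term ar \<nu> t \<subseteq> eval_term ar \<nu>' t" for t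
    by (rule eval_term_mono)
  then show "(\<lambda>U. \<Union> {eval_term ar \<nu> t | t. (U, t) \<in> R}) \<le> (\<lambda>U. \<Union> {eval_term ar \<nu>' t | t. (U, t) \<in> R})"
    unfolding le_fun_def by blast
qed

lemma least_solution_rule_subset:
  assumes "(U, t) \<in> R"
  shows "eval_term ar (least_solution ar R) t \<subseteq> least_solution ar R U"
proof -
  have "least_solution ar R U = \<Union> {eval_term ar (least_solution ar R) t | t. (U, t) \<in> R}"
    unfolding least_solution_def by (subst lfp_unfold[OF mono_grammar_step]) simp
  with assms show ?thesis by blast
qed

lemma least_solution_le:
  assumes "\<And>U t. (U, t) \<in> R \<Longrightarrow> eval_term ar \<nu> t \<subseteq> \<nu> U"
  shows "least_solution ar R \<le> \<nu>"
  unfolding least_solution_def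
  by (rule lfp_lowerbound) (use assms in \<open>auto simp: le_fun_def\<close>)

lemma G_gen_memI:
  "gen_term ar \<tau> (t :: ('s, 'a, nat) hrterm) \<Longrightarrow> G \<in> eval_term ar (\<lambda>_. {}) t \<Longrightarrow> G \<in> G_gen ar \<tau>"
  unfolding G_gen_def by blast

lemma G_gen_memE:
  fixes ar :: "'a \<Rightarrow> nat" and \<tau> :: "'s set"
  assumes "G \<in> G_gen ar \<tau>"
  obtains t :: "('s, 'a, nat) hrterm" where "gen_term ar \<tau> t" "G \<in> eval_term ar (\<lambda>_. {}) t"
  using assms unfolding G_gen_def by blast

lemma G_gen_restrict_closed:
  assumes "\<tau>' \<subseteq> \<tau>"
  shows "iso_closure ar (restrict_g \<tau>' ` G_gen ar \<tau>) \<subseteq> G_gen ar \<tau>"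
proof
  fix H assume "H \<in> iso_closure ar (restrict_g \<tau>' ` G_gen ar \<tau>)"
  then obtain G where "G \<in> G_gen ar \<tau>" "H \<in> iso_closure ar {restrict_g \<tau>' G}"
    unfolding iso_closure_def by blast
  moreover obtain t :: "(_, _, nat) hrterm" where "gen_term ar \<tau> t" "G \<in> eval_term ar (\<lambda>_. {}) t"
    using \<open>G \<in> G_gen ar \<tau>\<close> by (rule G_gen_memE)
  ultimately show "H \<in> G_gen ar \<tau>"
    using assms by (intro G_gen_memI[of ar \<tau> "Restrict \<tau>' t"]) (auto simp: iso_closure_def)
qed

lemma G_gen_rename_closed:
  assumes "finite_perm \<alpha>" "\<forall>s. s \<notin> \<tau> \<longrightarrow> \<alpha> s = s"
  shows "iso_closure ar (rename_g \<alpha> ` G_gen ar \<tau>) \<subseteq> G_gen ar \<tau>"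
proof
  fix H assume "H \<in> iso_closure ar (rename_g \<alpha> ` G_gen ar \<tau>)"
  then obtain G where "G \<in> G_gen ar \<tau>" "H \<in> iso_closure ar {rename_g \<alpha> G}"
    unfolding iso_closure_def by blast
  moreover obtain t :: "(_, _, nat) hrterm" where "gen_term ar \<tau> t" "G \<in> eval_term ar (\<lambda>_. {}) t"
    using \<open>G \<in> G_gen ar \<tau>\<close> by (rule G_gen_memE)
  ultimately show "H \<in> G_gen ar \<tau>"
    using assms by (intro G_gen_memI[of ar \<tau> "Rename \<alpha> t"]) (auto simp: iso_closure_def)
qed

lemma G_gen_par_closed:
  "iso_closure ar {par_g G H | G H. G \<in> G_gen ar \<tau> \<and> H \<in> G_gen ar \<tau>} \<subseteq> G_gen ar \<tau>"
proof
  fix K assume "K \<in> iso_closure ar {par_g G H | G H. G \<in> G_gen ar \<tau> \<and> H \<in> G_gen ar \<tau>}"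
  then obtain G H where "G \<in> G_gen ar \<tau>" "H \<in> G_gen ar \<tau>" "K \<in> iso_closure ar {par_g G H}"
    unfolding iso_closure_def by blast
  moreover obtain t :: "(_, _, nat) hrterm" where "gen_term ar \<tau> t" "G \<in> eval_term ar (\<lambda>_. {}) t"
    using \<open>G \<in> G_gen ar \<tau>\<close> by (rule G_gen_memE)
  moreover obtain u :: "(_, _, nat) hrterm" where "gen_term ar \<tau> u" "H \<in> eval_term ar (\<lambda>_. {}) u"
    using \<open>H \<in> G_gen ar \<tau>\<close> by (rule G_gen_memE)
  ultimately show "K \<in> G_gen ar \<tau>"
    by (intro G_gen_memI[of ar \<tau> "Par t u"]) (auto simp: iso_closure_def)
qed

definition gen_rules :: "('a \<Rightarrow> nat) \<Rightarrow> 's set \<Rightarrow> (nat \<times> ('s, 'a, nat) hrterm) set" where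
  "gen_rules ar \<tau> = Pair 0 `
     (Zero ` Pow \<tau>
      \<union> (\<Union>a. EdgeC a ` {ss. set ss \<subseteq> \<tau> \<and> length ss = ar a})
      \<union> (\<lambda>\<tau>'. Restrict \<tau>' (NT 0)) ` Pow \<tau>
      \<union> (\<lambda>\<alpha>. Rename \<alpha> (NT 0)) ` {\<alpha>. finite_perm \<alpha> \<and> (\<forall>s. s \<notin> \<tau> \<longrightarrow> \<alpha> s = s)}
      \<union> {Par (NT 0) (NT 0)})"

lemma finite_perm_permutes:
  "finite_perm \<alpha> \<Longrightarrow> \<forall>s. s \<notin> \<tau> \<longrightarrow> \<alpha> s = s \<Longrightarrow> \<alpha> permutes \<tau>"
  unfolding finite_perm_def permutes_def by (simp add: bij_iff)

lemma grammar_gen_rules: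
  fixes ar :: "'a \<Rightarrow> nat" and \<tau> :: "'s set"
  assumes "finite (UNIV :: 'a set)" "finite \<tau>"
  shows "grammar ar (gen_rules ar \<tau>)"
proof -
  have finite_perms: "finite {\<alpha>. finite_perm \<alpha> \<and> (\<forall>s. s \<notin> \<tau> \<longrightarrow> \<alpha> s = s)}"
    by (rule finite_subset[OF _ finite_permutations[OF assms(2)]])
      (blast intro: finite_perm_permutes)
  have finite_edges: "finite (\<Union>a. EdgeC a ` {ss. set ss \<subseteq> \<tau> \<and> length ss = ar a})"
    using assms by (intro finite_UN_I finite_imageI finite_lists_length_eq) simp_all
  have "finite (gen_rules ar \<tau>)"
    unfolding gen_rules_def
    by (intro finite_imageI finite_UnI) (simp_all add: finite_perms finite_edges assms(2))
  moreover have "valid_term ar t" if "(U, t) \<in> gen_rules ar \<tau>" for U t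
    using that unfolding gen_rules_def by (auto dest: rev_finite_subset[OF assms(2)])
  ultimately show ?thesis
    unfolding grammar_def by blast
qed

lemma G_gen_closed_under_gen_rules:
  assumes "(U, t) \<in> gen_rules ar \<tau>"
  shows "eval_term ar (\<lambda>_. G_gen ar \<tau>) t \<subseteq> G_gen ar \<tau>"
proof -
  from assms consider
      (Zero) \<tau>' where "t = Zero \<tau>'" "\<tau>' \<subseteq> \<tau>"
    | (EdgeC) a ss where "t = EdgeC a ss" "set ss \<subseteq> \<tau>" "length ss = ar a"
    | (Restrict) \<tau>' where "t = Restrict \<tau>' (NT 0)" "\<tau>' \<subseteq> \<tau>"
    | (Rename) \<alpha> where "t = Rename \<alpha> (NT 0)" "finite_perm \<alpha>" "\<forall>s. s \<notin> \<tau> \<longrightarrow> \<alpha> s = s"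
    | (Par) "t = Par (NT 0) (NT 0)"
    unfolding gen_rules_def by blast
  then show ?thesis
  proof cases
    case Zero
    then show ?thesis by (auto intro: G_gen_memI[of ar \<tau> "Zero \<tau>'"])
  next
    case EdgeC
    then show ?thesis by (auto intro: G_gen_memI[of ar \<tau> "EdgeC a ss"])
  next
    case Restrict
    then show ?thesis using G_gen_restrict_closed[of \<tau>' \<tau> ar] by simp
  next
    case Rename
    then show ?thesis using G_gen_rename_closed[of \<alpha> \<tau> ar] by simp
  next
    case Par
    then show ?thesis using G_gen_par_closed[of ar \<tau>] by simp
  qed
qed

lemma eval_gen_term_subset_least_solution:
  assumes "gen_term ar \<tau> t"
  shows "eval_term ar (\<lambda>_. {}) t \<subseteq> least_solution ar (gen_rules ar \<tau>) 0"
  using assms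
proof (induction t)
  case (Zero \<tau>')
  then have "(0, Zero \<tau>') \<in> gen_rules ar \<tau>"
    by (simp add: gen_rules_def)
  then show ?case
    using least_solution_rule_subset by fastforce
next
  case (EdgeC a ss)
  then have "(0, EdgeC a ss) \<in> gen_rules ar \<tau>"
    by (auto simp: gen_rules_def)
  then show ?case
    using least_solution_rule_subset by fastforce
next
  case (Restrict \<tau>' t)
  then have "(0, Restrict \<tau>' (NT 0)) \<in> gen_rules ar \<tau>"
    by (simp add: gen_rules_def)
  moreover have "eval_term ar (\<lambda>_. {}) (Restrict \<tau>' t)
      \<subseteq> eval_term ar (least_solution ar (gen_rules ar \<tau>)) (Restrict \<tau>' (NT 0))"
    using Restrict by (auto intro!: iso_closure_mono)
  ultimately show ?case
    by (blast dest: least_solution_rule_subset)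
next
  case (Rename \<alpha> t)
  then have "(0, Rename \<alpha> (NT 0)) \<in> gen_rules ar \<tau>"
    by (simp add: gen_rules_def)
  moreover have "eval_term ar (\<lambda>_. {}) (Rename \<alpha> t)
      \<subseteq> eval_term ar (least_solution ar (gen_rules ar \<tau>)) (Rename \<alpha> (NT 0))"
    using Rename by (auto intro!: iso_closure_mono)
  ultimately show ?case
    by (blast dest: least_solution_rule_subset)
next
  case (Par t u)
  have "(0, Par (NT 0) (NT 0)) \<in> gen_rules ar \<tau>"
    by (simp add: gen_rules_def)
  moreover have "eval_term ar (\<lambda>_. {}) (Par t u)
      \<subseteq> eval_term ar (least_solution ar (gen_rules ar \<tau>)) (Par (NT 0) (NT 0))"
    using Par by (simp only: eval_term.simps, intro iso_closure_mono) auto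
  ultimately show ?case
    by (blast dest: least_solution_rule_subset)
qed simp

theorem proposition5p1:
  fixes ar :: "'a \<Rightarrow> nat" and \<tau> :: "'s::countable set"
  assumes "infinite (UNIV :: 's set)"
    and "finite (UNIV :: 'a set)"
    and "\<forall>a. ar a \<ge> 1"
    and "finite \<tau>"
  shows "context_free ar (G_gen ar \<tau>)"
proof -
  have "least_solution ar (gen_rules ar \<tau>) \<le> (\<lambda>_. G_gen ar \<tau>)"
    by (rule least_solution_le) (rule G_gen_closed_under_gen_rules)
  moreover have "G_gen ar \<tau> \<subseteq> least_solution ar (gen_rules ar \<tau>) 0"
    by (blast elim: G_gen_memE dest: eval_gen_term_subset_least_solution)
  ultimately have "least_solution ar (gen_rules ar \<tau>) 0 = G_gen ar \<tau>"
    by (auto simp: le_fun_def)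
  then show ?thesis
    using grammar_gen_rules[OF assms(2,4)] unfolding context_free_def by blast
qed

end
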